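(* Let $G$, $p$ and $\ell$ be as in the construction described in the context. Every acyclic matching of $G$ of size at least $\ell$ saturates $p$; consequently, every such matching contains an edge $pp_q$ for some $q\in[t]$.
   Context: Construction. Let $n=3c$ with $c\in\mathbb{N}$, $X=[n]$, and let $(X,\mathcal{S}_1),\dots,(X,\mathcal{S}_t)$ be instances of \textsc{Exact-3-Cover} (each $\mathcal{S}_i$ a collection of 3-element subsets of $X$, all $\mathcal{S}_i$ of the same size $m$ and pairwise distinct as collections). Let $\mathcal{C}=\bigcup_{i\in[t]}\mathcal{S}_i=\{s_1,\dots,s_{|\mathcal{C}|}\}$ (distinct 3-sets). The graph $G$: a vertex set $X'=\{v_a:a\in X\}$; for each $s_j=\{a,b,c\}\in\mathcal{C}$ a set gadget $Q_j$ with vertices $u_{ja},u_{jb},u_{jc}$ (interface vertices), $u_j,w_j,u_j',w_j'$, where each of $u_j,w_j$ is adjacent to each of $u_{ja},u_{jb},u_{jc}$, and additionally $u_jw_j,u_ju_j',w_jw_j'$ are edges; for each $s_j\in\mathcal{C}$ and $d\in s_j$ the edge $u_{jd}v_d$ (cross edges); a vertex $p$ and vertices $P=\{p_1,\dots,p_t\}$ with edges $pp_i$ for all $i$; and for each $i\in[t]$ and each $s_j\in\mathcal{C}\setminus\mathcal{S}_i$, edges from $p_i$ to the three interface vertices of $Q_j$. There are no other edges. Set $\ell=2|\mathcal{C}|+\frac{2n}{3}+1$. A matching $M$ saturates a vertex $v$ if $v$ is an endpoint of an edge of $M$; $M$ is acyclic if the subgraph induced by the endpoints of its edges is a forest. 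*)

theory Defs
  imports Main
begin

text \<open>Vertices of the graph G. Set gadgets Q_j are indexed directly by the
(distinct) 3-set s_j itself.\<close>
datatype vert =
    Xv nat                 \<comment> \<open>v_a, a in X\<close>
  | Iv "nat set" nat       \<comment> \<open>interface vertex u_{ja}\<close>
  | Uv "nat set"
  | Wv "nat set"
  | U'v "nat set"
  | W'v "nat set"
  | Pv
  | PIv nat

definition collC :: "nat \<Rightarrow> (nat \<Rightarrow> nat set set) \<Rightarrow> nat set set" where
  "collC t S = (\<Union>i\<in>{1..t}. S i)"

definition G_edges :: "nat \<Rightarrow> (nat \<Rightarrow> nat set set) \<Rightarrow> vert set set" where
  "G_edges t S =
     {{Iv s a, Uv s} | s a. s \<in> collC t S \<and> a \<in> s}
   \<union> {{Iv s a, Wv s} | s a. s \<in> collC t S \<and> a \<in> s}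
   \<union> {{Uv s, Wv s} | s. s \<in> collC t S}
   \<union> {{Uv s, U'v s} | s. s \<in> collC t S}
   \<union> {{Wv s, W'v s} | s. s \<in> collC t S}
   \<union> {{Iv s a, Xv a} | s a. s \<in> collC t S \<and> a \<in> s}
   \<union> {{Pv, PIv i} | i. i \<in> {1..t}}
   \<union> {{PIv i, Iv s a} | i s a. i \<in> {1..t} \<and> s \<in> collC t S - S i \<and> a \<in> s}"

definition ell :: "nat \<Rightarrow> nat \<Rightarrow> (nat \<Rightarrow> nat set set) \<Rightarrow> nat" where
  "ell c t S = 2 * card (collC t S) + 2 * (3 * c) div 3 + 1"

definition is_matching :: "'a set set \<Rightarrow> 'a set set \<Rightarrow> bool" where
  "is_matching E M \<longleftrightarrow> M \<subseteq> E \<and> (\<forall>e\<in>M. \<forall>f\<in>M. e \<noteq> f \<longrightarrow> e \<inter> f = {})"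

definition has_cycle :: "'a set set \<Rightarrow> bool" where
  "has_cycle F \<longleftrightarrow> (\<exists>vs. length vs \<ge> 3 \<and> distinct vs \<and>
      (\<forall>i<length vs. {vs ! i, vs ! ((i + 1) mod length vs)} \<in> F))"

definition induced_edges :: "'a set set \<Rightarrow> 'a set \<Rightarrow> 'a set set" where
  "induced_edges E V = {e \<in> E. e \<subseteq> V}"

definition acyclic_matching :: "'a set set \<Rightarrow> 'a set set \<Rightarrow> bool" where
  "acyclic_matching E M \<longleftrightarrow> is_matching E M \<and> \<not> has_cycle (induced_edges E (\<Union>M))"

definition saturates :: "'a set set \<Rightarrow> 'a \<Rightarrow> bool" where
  "saturates M v \<longleftrightarrow> (\<exists>e\<in>M. v \<in> e)"

end

theory Submission
  imports Defs
begin

text \<open>Suppose an acyclic matching M misses p. Charge every edge of M to the set gadget Q_s it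
  meets (every edge avoiding p meets one). Acyclicity forbids the triangle u_s u_{sa} w_s and the
  squares p_i u_{sa} p_j u_{sb} and p_i u_{sa} x u_{sb} with x \<in> {u_s, w_s}; together with the
  matching property this leaves at most 2 + 2k/3 edges charged to Q_s, where k is the number of
  its cross edges u_{sa} v_a. Cross edges saturate distinct v_a, so summing gives
  |M| \<le> 2|C| + 2n/3 < \<ell>.\<close>

lemma has_cycle_triangle:
  assumes "distinct [x, y, z]" "{x, y} \<in> F" "{y, z} \<in> F" "{z, x} \<in> F"
  shows "has_cycle F"
  unfolding has_cycle_def
proof (intro exI[of _ "[x, y, z]"] conjI allI impI)
  fix i assume "i < length [x, y, z]"
  then consider "i = 0" | "i = 1" | "i = 2" by fastforce
  then show "{[x, y, z] ! i, [x, y, z] ! ((i + 1) mod length [x, y, z])} \<in> F"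
    by cases (use assms in simp_all)
qed (use assms in simp_all)

lemma has_cycle_square:
  assumes "distinct [x, y, z, w]" "{x, y} \<in> F" "{y, z} \<in> F" "{z, w} \<in> F" "{w, x} \<in> F"
  shows "has_cycle F"
  unfolding has_cycle_def
proof (intro exI[of _ "[x, y, z, w]"] conjI allI impI)
  fix i assume "i < length [x, y, z, w]"
  then consider "i = 0" | "i = 1" | "i = 2" | "i = 3" by fastforce
  then show "{[x, y, z, w] ! i, [x, y, z, w] ! ((i + 1) mod length [x, y, z, w])} \<in> F"
    by cases (use assms in simp_all)
qed (use assms in simp_all)

lemma acyclic_matching_no_triangle:
  assumes "acyclic_matching E M" "distinct [x, y, z]"
    "{x, y} \<in> E" "{y, z} \<in> E" "{z, x} \<in> E" "{x, y, z} \<subseteq> \<Union>M"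
  shows False
proof -
  have "has_cycle (induced_edges E (\<Union>M))"
    by (rule has_cycle_triangle) (use assms in \<open>auto simp: induced_edges_def\<close>)
  with assms(1) show False
    unfolding acyclic_matching_def by blast
qed

lemma acyclic_matching_no_square:
  assumes "acyclic_matching E M" "distinct [x, y, z, w]"
    "{x, y} \<in> E" "{y, z} \<in> E" "{z, w} \<in> E" "{w, x} \<in> E" "{x, y, z, w} \<subseteq> \<Union>M"
  shows False
proof -
  have "has_cycle (induced_edges E (\<Union>M))"
    by (rule has_cycle_square) (use assms in \<open>auto simp: induced_edges_def\<close>)
  with assms(1) show False
    unfolding acyclic_matching_def by blast
qed

lemma matching_disjoint:
  "is_matching E M \<Longrightarrow> e \<in> M \<Longrightarrow> f \<in> M \<Longrightarrow> e \<noteq> f \<Longrightarrow> e \<inter> f = {}"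
  unfolding is_matching_def by blast

lemma matching_card_le_hitting_set:
  assumes "is_matching E M" "A \<subseteq> M" "finite B" "\<forall>e\<in>A. \<exists>v\<in>B. v \<in> e"
  shows "card A \<le> card B"
proof -
  obtain f where f: "\<forall>e\<in>A. f e \<in> B \<and> f e \<in> e"
    using bchoice[of A "\<lambda>e v. v \<in> B \<and> v \<in> e"] assms(4) by blast
  have "inj_on f A"
  proof (rule inj_onI, rule ccontr)
    fix e e' assume "e \<in> A" "e' \<in> A" "f e = f e'" "e \<noteq> e'"
    then have "f e \<in> e \<inter> e'" using f by auto
    moreover have "e \<inter> e' = {}"
      using matching_disjoint[OF assms(1)] assms(2) \<open>e \<in> A\<close> \<open>e' \<in> A\<close> \<open>e \<noteq> e'\<close> by blast
    ultimately show False by blast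
  qed
  moreover have "f ` A \<subseteq> B" using f by blast
  ultimately show ?thesis by (rule card_inj_on_le[OF _ _ assms(3)])
qed

lemma G_edges_gadget:
  assumes "s \<in> collC t S" "a \<in> s"
  shows "{Iv s a, Uv s} \<in> G_edges t S" "{Iv s a, Wv s} \<in> G_edges t S"
    "{Uv s, Wv s} \<in> G_edges t S"
  using assms by (auto simp: G_edges_def)

lemma G_edges_p_interface:
  assumes "s \<in> collC t S" "a \<in> s" "i \<in> {1..t}" "s \<notin> S i"
  shows "{PIv i, Iv s a} \<in> G_edges t S"
  unfolding G_edges_def by (rule UnI2) (use assms in blast)

lemma G_edges_at_p:
  assumes "e \<in> G_edges t S" "Pv \<in> e"
  shows "\<exists>q\<in>{1..t}. e = {Pv, PIv q}"
  using assms unfolding G_edges_def by (elim UnE) auto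

lemma G_edges_away_from_p:
  assumes "e \<in> G_edges t S" "Pv \<notin> e"
  shows "\<exists>s\<in>collC t S. Uv s \<in> e \<or> Wv s \<in> e \<or> (\<exists>a\<in>s. e = {Iv s a, Xv a})
    \<or> (\<exists>i a. i \<in> {1..t} \<and> s \<notin> S i \<and> a \<in> s \<and> e = {PIv i, Iv s a})"
  using assms unfolding G_edges_def by (elim UnE) auto

locale acyclic_matching_of_G =
  fixes t :: nat and S :: "nat \<Rightarrow> nat set set" and M :: "vert set set"
  assumes acyclic: "acyclic_matching (G_edges t S) M"
    and finite_M: "finite M"
begin

lemma matching: "is_matching (G_edges t S) M"
  using acyclic unfolding acyclic_matching_def by blast

definition u_edges :: "nat set \<Rightarrow> vert set set" where
  "u_edges s = {e \<in> M. Uv s \<in> e}"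

definition w_edges :: "nat set \<Rightarrow> vert set set" where
  "w_edges s = {e \<in> M. Wv s \<in> e}"

definition cross_edges :: "nat set \<Rightarrow> vert set set" where
  "cross_edges s = {e \<in> M. \<exists>a\<in>s. e = {Iv s a, Xv a}}"

definition p_edges :: "nat set \<Rightarrow> vert set set" where
  "p_edges s = {e \<in> M. \<exists>i a. i \<in> {1..t} \<and> s \<notin> S i \<and> a \<in> s \<and> e = {PIv i, Iv s a}}"

lemma finite_edge_classes:
  "finite (u_edges s)" "finite (w_edges s)" "finite (cross_edges s)" "finite (p_edges s)"
  using finite_M by (auto simp: u_edges_def w_edges_def cross_edges_def p_edges_def)

lemma card_u_edges_le: "card (u_edges s) \<le> 1"
  using matching_card_le_hitting_set[OF matching, of "u_edges s" "{Uv s}"]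
  by (auto simp: u_edges_def)

lemma card_w_edges_le: "card (w_edges s) \<le> 1"
  using matching_card_le_hitting_set[OF matching, of "w_edges s" "{Wv s}"]
  by (auto simp: w_edges_def)

lemma cross_p_edges_disjoint: "cross_edges s \<inter> p_edges s = {}"
  by (auto simp: cross_edges_def p_edges_def doubleton_eq_iff)

lemma cross_edges_disjoint:
  assumes "s \<noteq> s'"
  shows "cross_edges s \<inter> cross_edges s' = {}"
proof -
  have False if "{Iv s a, Xv a} = {Iv s' b, Xv b}" for a b
    using arg_cong[OF that, of "\<lambda>e. Iv s a \<in> e"] assms by simp
  then show ?thesis
    unfolding cross_edges_def by blast
qed

lemma card_interface_edges_le:
  assumes "finite s"
  shows "card (cross_edges s \<union> p_edges s) \<le> card s"
proof -
  have "card (cross_edges s \<union> p_edges s) \<le> card (Iv s ` s)"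
    by (rule matching_card_le_hitting_set[OF matching])
      (use assms in \<open>auto simp: cross_edges_def p_edges_def\<close>)
  also have "\<dots> \<le> card s" by (rule card_image_le[OF assms])
  finally show ?thesis .
qed

lemma card_p_edges_le:
  assumes "s \<in> collC t S"
  shows "card (p_edges s) \<le> 1"
proof -
  have "e = e'" if edges: "e \<in> p_edges s" "e' \<in> p_edges s" for e e'
  proof (rule ccontr)
    assume "e \<noteq> e'"
    obtain i a j b where e: "e \<in> M" "i \<in> {1..t}" "s \<notin> S i" "a \<in> s" "e = {PIv i, Iv s a}"
      and e': "e' \<in> M" "j \<in> {1..t}" "s \<notin> S j" "b \<in> s" "e' = {PIv j, Iv s b}"
      using edges by (auto simp: p_edges_def)
    with \<open>e \<noteq> e'\<close> have "i \<noteq> j" "a \<noteq> b"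
      using matching_disjoint[OF matching e(1) e'(1)] by auto
    then show False
      using acyclic_matching_no_square[OF acyclic, of "PIv i" "Iv s a" "PIv j" "Iv s b"]
        G_edges_p_interface[OF assms] e e' by (auto simp: insert_commute)
  qed
  then show ?thesis
    using card_le_Suc0_iff_eq[OF finite_edge_classes(4)] by auto
qed

lemma interface_edges_empty_if_u_w_saturated:
  assumes "s \<in> collC t S" "u_edges s \<noteq> {}" "w_edges s \<noteq> {}"
  shows "cross_edges s \<union> p_edges s = {}"
proof -
  have "Uv s \<in> \<Union>M" "Wv s \<in> \<Union>M"
    using assms(2,3) by (auto simp: u_edges_def w_edges_def)
  moreover have False if e: "e \<in> cross_edges s \<union> p_edges s" for e
  proof -
    obtain a where "a \<in> s" "Iv s a \<in> \<Union>M"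
      using e unfolding cross_edges_def p_edges_def by blast
    with \<open>Uv s \<in> \<Union>M\<close> \<open>Wv s \<in> \<Union>M\<close> show False
      using acyclic_matching_no_triangle[OF acyclic, of "Uv s" "Iv s a" "Wv s"]
        G_edges_gadget[OF assms(1)] by (auto simp: insert_commute)
  qed
  ultimately show ?thesis by blast
qed

lemma card_interface_edges_le_1_if_p_saturated:
  assumes "s \<in> collC t S" "p_edges s \<noteq> {}" "u_edges s \<noteq> {} \<or> w_edges s \<noteq> {}"
  shows "card (cross_edges s \<union> p_edges s) \<le> 1"
proof -
  obtain x where x: "x = Uv s \<or> x = Wv s" "x \<in> \<Union>M"
    using assms(3) by (auto simp: u_edges_def w_edges_def)
  obtain e0 i a where e0: "e0 \<in> M" "i \<in> {1..t}" "s \<notin> S i" "a \<in> s" "e0 = {PIv i, Iv s a}"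
    using assms(2) by (auto simp: p_edges_def)
  have "e = e0" if e: "e \<in> cross_edges s \<union> p_edges s" for e
  proof (rule ccontr)
    assume "e \<noteq> e0"
    obtain b where b: "e \<in> M" "b \<in> s" "Iv s b \<in> e"
      using e by (auto simp: cross_edges_def p_edges_def)
    with \<open>e \<noteq> e0\<close> have "a \<noteq> b"
      using matching_disjoint[OF matching b(1) e0(1)] e0(5) by auto
    then show False
      using acyclic_matching_no_square[OF acyclic, of "PIv i" "Iv s a" x "Iv s b"]
        G_edges_p_interface[OF assms(1) _ e0(2,3)] G_edges_gadget[OF assms(1)] x e0 b
      by (auto simp: insert_commute)
  qed
  then have "cross_edges s \<union> p_edges s \<subseteq> {e0}"
    by blast
  then show ?thesis
    using card_mono[of "{e0}"] by fastforce
qed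

lemma gadget_charge:
  assumes "s \<in> collC t S" "card s = 3"
  shows "3 * (card (u_edges s) + card (w_edges s) + card (cross_edges s) + card (p_edges s))
    \<le> 6 + 2 * card (cross_edges s)"
proof -
  have interface: "card (cross_edges s \<union> p_edges s) = card (cross_edges s) + card (p_edges s)"
    using card_Un_disjoint[OF finite_edge_classes(3,4) cross_p_edges_disjoint] .
  have "finite s"
    using assms(2) card.infinite by fastforce
  then have "card (cross_edges s) + card (p_edges s) \<le> 3"
    using card_interface_edges_le[of s] assms(2) interface by simp
  moreover have "card (u_edges s) = 1 \<and> card (w_edges s) = 1
      \<longrightarrow> card (cross_edges s) + card (p_edges s) = 0"
    using interface_edges_empty_if_u_w_saturated[OF assms(1)] interface by force
  moreover have "card (p_edges s) = 1 \<and> (card (u_edges s) = 1 \<or> card (w_edges s) = 1)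
      \<longrightarrow> card (cross_edges s) + card (p_edges s) \<le> 1"
    using card_interface_edges_le_1_if_p_saturated[OF assms(1)] interface by force
  moreover note card_u_edges_le[of s] card_w_edges_le[of s] card_p_edges_le[OF assms(1)]
  ultimately show ?thesis
    by (auto simp: le_Suc_eq)
qed

lemma edge_charged_to_gadget:
  assumes "e \<in> M" "Pv \<notin> e"
  shows "\<exists>s\<in>collC t S. e \<in> u_edges s \<union> w_edges s \<union> cross_edges s \<union> p_edges s"
  using G_edges_away_from_p[of e t S] assms matching
  unfolding is_matching_def u_edges_def w_edges_def cross_edges_def p_edges_def by blast

lemma card_cross_edges_le:
  assumes "\<forall>s\<in>collC t S. s \<subseteq> X" "finite X"
  shows "card (\<Union>s\<in>collC t S. cross_edges s) \<le> card X"
  by (rule matching_card_le_hitting_set[OF matching, of _ "Xv ` X", THEN order_trans])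
    (use assms in \<open>auto simp: cross_edges_def intro: card_image_le\<close>)

lemma card_le_if_p_unsaturated:
  assumes "\<not> saturates M Pv" "\<forall>s\<in>collC t S. card s = 3 \<and> s \<subseteq> X" "finite X"
  shows "3 * card M \<le> 6 * card (collC t S) + 2 * card X"
proof -
  let ?C = "collC t S"
  let ?charged = "\<lambda>s. u_edges s \<union> w_edges s \<union> cross_edges s \<union> p_edges s"
  let ?size = "\<lambda>s. card (u_edges s) + card (w_edges s) + card (cross_edges s) + card (p_edges s)"
  have finite_C: "finite ?C"
    using assms(2,3) by (meson PowI finite_Pow_iff finite_subset subsetI)
  have "M \<subseteq> (\<Union>s\<in>?C. ?charged s)"
    using edge_charged_to_gadget assms(1) unfolding saturates_def by blast
  then have "card M \<le> card (\<Union>s\<in>?C. ?charged s)"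
    by (rule card_mono[rotated]) (use finite_C finite_edge_classes in simp)
  also have "\<dots> \<le> (\<Sum>s\<in>?C. card (?charged s))"
    by (rule card_UN_le[OF finite_C])
  also have "\<dots> \<le> (\<Sum>s\<in>?C. ?size s)"
    by (intro sum_mono order_trans[OF card_Un_le] add_mono order_refl)
  finally have "3 * card M \<le> (\<Sum>s\<in>?C. 3 * ?size s)"
    by (simp only: sum_distrib_left[symmetric])
  also have "\<dots> \<le> (\<Sum>s\<in>?C. 6 + 2 * card (cross_edges s))"
    by (rule sum_mono) (use gadget_charge assms(2) in blast)
  also have "\<dots> = 6 * card ?C + 2 * card (\<Union>s\<in>?C. cross_edges s)"
  proof -
    have "card (\<Union>s\<in>?C. cross_edges s) = (\<Sum>s\<in>?C. card (cross_edges s))"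
      by (rule card_UN_disjoint[OF finite_C]) (use finite_edge_classes(3) cross_edges_disjoint in auto)
    then show ?thesis
      by (simp add: sum.distrib sum_distrib_left)
  qed
  also have "\<dots> \<le> 6 * card ?C + 2 * card X"
    using card_cross_edges_le assms(2,3) by simp
  finally show ?thesis .
qed

end

theorem lemma15:
  fixes c t m :: nat and S :: "nat \<Rightarrow> nat set set" and M :: "vert set set"
  assumes three_sets: "\<forall>i\<in>{1..t}. \<forall>s\<in>S i. s \<subseteq> {1..3 * c} \<and> card s = 3"
    and same_size: "\<forall>i\<in>{1..t}. card (S i) = m"
    and distinct_inst: "\<forall>i\<in>{1..t}. \<forall>j\<in>{1..t}. i \<noteq> j \<longrightarrow> S i \<noteq> S j"
    and acyc: "acyclic_matching (G_edges t S) M"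
    and size: "card M \<ge> ell c t S"
  shows "saturates M Pv \<and> (\<exists>q\<in>{1..t}. {Pv, PIv q} \<in> M)"
proof -
  have ell: "ell c t S = 2 * card (collC t S) + 2 * c + 1"
    unfolding ell_def by simp
  with size have "finite M"
    using card.infinite by fastforce
  then interpret acyclic_matching_of_G t S M
    using acyc by unfold_locales
  have sets: "\<forall>s\<in>collC t S. card s = 3 \<and> s \<subseteq> {1..3 * c}"
    using three_sets unfolding collC_def by blast
  have "saturates M Pv"
    using card_le_if_p_unsaturated[OF _ sets] size ell by fastforce
  then obtain e where "e \<in> M" "Pv \<in> e"
    unfolding saturates_def by blast
  moreover have "e \<in> G_edges t S"
    using matching \<open>e \<in> M\<close> unfolding is_matching_def by blast
  ultimately show ?thesis
    using G_edges_at_p \<open>saturates M Pv\<close> by blast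
qed

end
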